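(* Let $q$ be a prime power, $m\ge 1$, and let $\mathcal{C}\subseteq\mathbb{F}_{q^m}^n$ be an $\mathbb{F}_{q^m}$-linear code of dimension $k$ whose length $n=n_1+\dots+n_\ell$ is partitioned into $\ell$ blocks (all $n_i>0$). Let $\mathbf{H}=(\mathbf{H}^{(1)}\mid\dots\mid\mathbf{H}^{(\ell)})\in\mathbb{F}_{q^m}^{(n-k)\times n}$, $\mathbf{H}^{(i)}\in\mathbb{F}_{q^m}^{(n-k)\times n_i}$, be a parity-check matrix of $\mathcal{C}$. Let $s\ge 1$ and let $\mathbf{E}=(\mathbf{E}^{(1)}\mid\dots\mid\mathbf{E}^{(\ell)})\in\mathbb{F}_{q^m}^{s\times n}$ with $\mathbf{E}^{(i)}\in\mathbb{F}_{q^m}^{s\times n_i}$ and $\operatorname{rk}_q(\mathbf{E}^{(i)})=t_i$ for all $i\in[1:\ell]$, so that $\mathbf{E}$ has sum-rank weight $t=\sum_{i=1}^\ell t_i$, and assume $t<n-k$. Let $\mathbf{S}=\mathbf{H}\mathbf{E}^\top\in\mathbb{F}_{q^m}^{(n-k)\times s}$ and let $\mathbf{P}\in\mathbb{F}_{q^m}^{(n-k)\times(n-k)}$ with $\operatorname{rk}_{q^m}(\mathbf{P})=n-k$ be such that $\mathbf{P}\mathbf{S}$ is in row-echelon form. Then $\mathbf{P}\mathbf{S}$ has at least $n-k-t$ zero rows. Moreover, if $\mathbf{H}_{\mathrm{sub}}$ denotes the submatrix of $\mathbf{P}\mathbf{H}$ consisting of the rows corresponding to the zero rows of $\mathbf{P}\mathbf{S}$,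 then the $\mathbb{F}_{q^m}$-row space of $\mathbf{H}_{\mathrm{sub}}$ equals $\ker_r(\mathbf{E})_{q^m}\cap\mathcal{C}^\perp$, equivalently $\ker_r(\mathbf{E})_{q^m}$ intersected with the $\mathbb{F}_{q^m}$-row space of $\mathbf{H}$.
   Context: Fix an ordered basis $\mathbf{b}=(b_1,\dots,b_m)$ of $\mathbb{F}_{q^m}$ over $\mathbb{F}_q$; for $\alpha\in\mathbb{F}_{q^m}$, $\operatorname{ext}(\alpha)\in\mathbb{F}_q^{m}$ is the column vector with $\alpha=\mathbf{b}\cdot\operatorname{ext}(\alpha)$, and $\operatorname{ext}$ is applied entrywise to vectors and matrices (an $a\times b$ matrix over $\mathbb{F}_{q^m}$ becomes an $am\times b$ matrix over $\mathbb{F}_q$). For a matrix $\mathbf{X}$ over $\mathbb{F}_{q^m}$, $\operatorname{rk}_q(\mathbf{X}):=\operatorname{rk}(\operatorname{ext}(\mathbf{X}))$ over $\mathbb{F}_q$ and $\operatorname{rk}_{q^m}$ is the usual rank over $\mathbb{F}_{q^m}$. For a vector $\mathbf{x}=(\mathbf{x}^{(1)}\mid\dots\mid\mathbf{x}^{(\ell)})$ (or matrix with column blocks) the sum-rank weight w.r.t. the partition $(n_1,\dots,n_\ell)$ is $\sum_i\operatorname{rk}_q(\mathbf{x}^{(i)})$. For a matrix $\mathbf{M}$ over $\mathbb{F}_{q^m}$ with $n$ columns, $\ker_r(\mathbf{M})_{q^m}=\{\mathbf{v}\in\mathbb{F}_{q^m}^n:\mathbf{M}\mathbf{v}^\top=\mathbf{0}\}$.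 $\mathcal{C}^\perp$ is the dual code, i.e. the $\mathbb{F}_{q^m}$-row space of $\mathbf{H}$. *)

theory Defs
  imports "Jordan_Normal_Form.DL_Rank" "Jordan_Normal_Form.DL_Submatrix"
begin

text \<open>The small field F_q is a finite field type 'f, embedded into the big field type 'a
  (playing F_{q^m}) via a field homomorphism emb. A basis b of 'a over 'f has length m.\<close>

definition ext_elem :: "('f::field \<Rightarrow> 'a::field) \<Rightarrow> 'a list \<Rightarrow> 'a \<Rightarrow> 'f vec" where
  "ext_elem emb b \<alpha> = (THE c. c \<in> carrier_vec (length b) \<and>
       \<alpha> = (\<Sum>j<length b. emb (c $ j) * b ! j))"

text \<open>ext applied entrywise: an a x c matrix becomes an (a*m) x c matrix over 'f;
  entry (i,j) is replaced by the column ext(X(i,j)), occupying rows i*m .. i*m+m-1.\<close>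
definition ext_mat :: "('f::field \<Rightarrow> 'a::field) \<Rightarrow> 'a list \<Rightarrow> 'a mat \<Rightarrow> 'f mat" where
  "ext_mat emb b X = mat (dim_row X * length b) (dim_col X)
      (\<lambda>(r, c). ext_elem emb b (X $$ (r div length b, c)) $ (r mod length b))"

definition rank_q :: "('f::field \<Rightarrow> 'a::field) \<Rightarrow> 'a list \<Rightarrow> 'a mat \<Rightarrow> nat" where
  "rank_q emb b X = vec_space.rank (dim_row (ext_mat emb b X)) (ext_mat emb b X)"

definition rank_qm :: "'a::field mat \<Rightarrow> nat" where
  "rank_qm A = vec_space.rank (dim_row A) A"

definition col_block :: "nat list \<Rightarrow> nat \<Rightarrow> 'a mat \<Rightarrow> 'a mat" where
  "col_block ns i X = submatrix X UNIV {sum_list (take i ns) ..< sum_list (take (Suc i) ns)}"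

definition sum_rank_weight :: "('f::field \<Rightarrow> 'a::field) \<Rightarrow> 'a list \<Rightarrow> nat list \<Rightarrow> 'a mat \<Rightarrow> nat" where
  "sum_rank_weight emb b ns X = (\<Sum>i<length ns. rank_q emb b (col_block ns i X))"

text \<open>(Not necessarily reduced) row echelon form: f i is the pivot column of row i
  (= number of columns if the row is zero); pivots strictly increase, zero rows at the bottom.\<close>
definition row_echelon :: "'a::zero mat \<Rightarrow> bool" where
  "row_echelon A \<longleftrightarrow> (\<exists>f. \<forall>i < dim_row A. f i \<le> dim_col A \<and>
      (\<forall>j < f i. A $$ (i, j) = 0) \<and>
      (f i < dim_col A \<longrightarrow> A $$ (i, f i) \<noteq> 0) \<and>
      (Suc i < dim_row A \<longrightarrow> f i < f (Suc i) \<or> f (Suc i) = dim_col A))"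

definition row_space :: "'a::comm_ring_1 mat \<Rightarrow> 'a vec set" where
  "row_space M = {v. \<exists>x \<in> carrier_vec (dim_row M). v = transpose_mat M *\<^sub>v x}"

definition right_kernel :: "'a::comm_ring_1 mat \<Rightarrow> 'a vec set" where
  "right_kernel M = {v \<in> carrier_vec (dim_col M). M *\<^sub>v v = 0\<^sub>v (dim_row M)}"

definition dual_code :: "nat \<Rightarrow> 'a::comm_ring_1 vec set \<Rightarrow> 'a vec set" where
  "dual_code n C = {v \<in> carrier_vec n. \<forall>c \<in> C. v \<bullet> c = 0}"

definition zero_rows :: "'a::zero mat \<Rightarrow> nat set" where
  "zero_rows A = {j. j < dim_row A \<and> row A j = 0\<^sub>v (dim_col A)}"

end

theory Submission
  imports Defs
begin

(* The columns of a block E^(i) are F_q-combinations of t_i vectors of F_q^(sm), since ext(E^(i))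
   has F_q-rank t_i; reassembling those vectors with the basis b exhibits the columns as
   F_(q^m)-combinations of t_i vectors of F_(q^m)^s. So E, and with it P H E^T, factors through
   F_(q^m)^t. The nonzero rows of a row echelon matrix are linearly independent, hence there are
   at most t of them. Moreover (P H E^T)^T z = 0 holds exactly for the z supported on the zero rows,
   and (P H E^T)^T z = E (P H)^T z; as P is invertible, the combinations of rows of P H indexed by
   zero rows are exactly the vectors of the row space of H killed by E. For H of full row rank
   that row space is the dual of the kernel of H. *)

lemma index_transpose_mult_mat_vec:
  assumes "z \<in> carrier_vec (dim_row A)" and "c < dim_col A"
  shows "(transpose_mat A *\<^sub>v z) $ c = (\<Sum>i<dim_row A. A $$ (i, c) * z $ i)"
  using assms by (auto simp: scalar_prod_def lessThan_atLeast0 intro!: sum.cong)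

lemma mult_mat_vec_unit_vec:
  fixes A :: "'a::semiring_1 mat"
  assumes "A \<in> carrier_mat n r" and "k < r"
  shows "A *\<^sub>v unit_vec r k = col A k"
  using assms by (intro eq_vecI) auto

lemma mat_factor_of_cols_in_range:
  assumes A: "A \<in> carrier_mat n nc" and G: "G \<in> carrier_mat n r"
    and range: "\<And>c. c < nc \<Longrightarrow> \<exists>y \<in> carrier_vec r. col A c = G *\<^sub>v y"
  shows "\<exists>Y \<in> carrier_mat r nc. A = G * Y"
proof -
  obtain y where y: "\<And>c. c < nc \<Longrightarrow> y c \<in> carrier_vec r \<and> col A c = G *\<^sub>v y c"
    using range by metis
  define Y where "Y = mat r nc (\<lambda>(i, c). y c $ i)"
  have "col Y c = y c" if "c < nc" for c
    using y[OF that] that by (intro eq_vecI) (auto simp: Y_def)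
  moreover have "A $$ (i, c) = (G *\<^sub>v y c) $ i" if "i < n" "c < nc" for i c
    using arg_cong[OF conjunct2[OF y[OF \<open>c < nc\<close>]], of "\<lambda>v. v $ i"] A that by simp
  ultimately have "A = G * Y"
    using A G y by (intro eq_matI) (auto simp: Y_def)
  then show ?thesis by (auto simp: Y_def)
qed

lemma mat_factor_of_cols_subset:
  fixes G1 :: "'a::semiring_1 mat"
  assumes G1: "G1 \<in> carrier_mat n r1" and G2: "G2 \<in> carrier_mat n r2"
    and sub: "set (cols G1) \<subseteq> set (cols G2)"
  shows "\<exists>S \<in> carrier_mat r2 r1. G1 = G2 * S"
proof (rule mat_factor_of_cols_in_range[OF G1 G2])
  fix c assume "c < r1"
  then have "col G1 c \<in> set (cols G2)" using sub G1 by (auto simp: cols_def)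
  then obtain k where "k < r2" "col G1 c = col G2 k" using G2 by (auto simp: cols_def)
  then show "\<exists>y \<in> carrier_vec r2. col G1 c = G2 *\<^sub>v y"
    using mult_mat_vec_unit_vec[OF G2] unit_vec_carrier by metis
qed

lemma wide_mat_kernel_nontrivial:
  fixes A :: "'a::field mat"
  assumes A: "A \<in> carrier_mat nr nc" and wide: "nr < nc"
  shows "\<exists>v \<in> carrier_vec nc. v \<noteq> 0\<^sub>v nc \<and> A *\<^sub>v v = 0\<^sub>v nr"
proof -
  define B where "B = mat nc nc (\<lambda>(i, j). if i < nr then A $$ (i, j) else 0)"
  have B: "B \<in> carrier_mat nc nc" unfolding B_def by simp
  have "B = mat\<^sub>r nc nc (\<lambda>i. if i = nr then 0\<^sub>v nc else row B i)"
    by (rule eq_matI) (auto simp: B_def)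
  then have "det B = 0"
    using det_row_0[OF wide, of "\<lambda>i. row B i"] B by simp
  then obtain v where v: "v \<in> carrier_vec nc" "v \<noteq> 0\<^sub>v nc" "B *\<^sub>v v = 0\<^sub>v nc"
    using det_0_iff_vec_prod_zero_field[OF B] by blast
  have "A *\<^sub>v v = 0\<^sub>v nr"
  proof (rule eq_vecI)
    fix i assume "i < dim_vec (0\<^sub>v nr :: 'a vec)"
    then have i: "i < nr" by simp
    have "row A i \<bullet> v = row B i \<bullet> v"
      using A v(1) i wide by (auto simp: B_def scalar_prod_def)
    also have "\<dots> = 0" using arg_cong[OF v(3), of "\<lambda>w. w $ i"] B i wide by simp
    finally show "(A *\<^sub>v v) $ i = 0\<^sub>v nr $ i" using A i by simp
  qed (use A in simp)
  then show ?thesis using v by blast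
qed

definition factors_through :: "'a::semiring_0 mat \<Rightarrow> nat \<Rightarrow> bool" where
  "factors_through A r \<longleftrightarrow>
     (\<exists>G Y. G \<in> carrier_mat (dim_row A) r \<and> Y \<in> carrier_mat r (dim_col A) \<and> A = G * Y)"

lemma factors_throughI:
  assumes "A \<in> carrier_mat n nc" and "G \<in> carrier_mat n r"
    and "\<And>c. c < nc \<Longrightarrow> \<exists>y \<in> carrier_vec r. col A c = G *\<^sub>v y"
  shows "factors_through A r"
  using mat_factor_of_cols_in_range[OF assms] assms(1,2) unfolding factors_through_def by blast

lemma factors_through_transpose:
  fixes A :: "'a::comm_semiring_0 mat"
  assumes "factors_through A r"
  shows "factors_through (transpose_mat A) r"
proof -
  obtain G Y where G: "G \<in> carrier_mat (dim_row A) r" and Y: "Y \<in> carrier_mat r (dim_col A)"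
    and A: "A = G * Y"
    using assms unfolding factors_through_def by blast
  have "transpose_mat A = transpose_mat Y * transpose_mat G"
    unfolding A using transpose_mult[OF G Y] .
  then show ?thesis
    unfolding factors_through_def using G Y
    by (intro exI[of _ "transpose_mat Y"] exI[of _ "transpose_mat G"]) auto
qed

lemma factors_through_mult_left:
  assumes "factors_through A r" and B: "B \<in> carrier_mat m (dim_row A)"
  shows "factors_through (B * A) r"
proof -
  obtain G Y where G: "G \<in> carrier_mat (dim_row A) r" and Y: "Y \<in> carrier_mat r (dim_col A)"
    and A: "A = G * Y"
    using assms unfolding factors_through_def by blast
  have "B * A = (B * G) * Y"
    unfolding A using assoc_mult_mat[OF B G Y] by simp
  then show ?thesis
    unfolding factors_through_def using B G Y by (intro exI[of _ "B * G"] exI[of _ Y]) auto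
qed

lemma independent_rows_le_factor_dim:
  fixes A :: "'a::field mat"
  assumes A: "A \<in> carrier_mat N s" and "factors_through A t" and r: "r \<le> N"
    and indep: "\<And>z. z \<in> carrier_vec N \<Longrightarrow> transpose_mat A *\<^sub>v z = 0\<^sub>v s
      \<Longrightarrow> \<forall>j<r. z $ j = 0"
  shows "r \<le> t"
proof (rule ccontr)
  assume "\<not> r \<le> t"
  obtain G Y where G: "G \<in> carrier_mat N t" and Y: "Y \<in> carrier_mat t s" and GY: "A = G * Y"
    using assms(2) A unfolding factors_through_def by auto
  \<comment> \<open>if t < r, some nontrivial combination of the first r rows of G vanishes\<close>
  define G\<^sub>r where "G\<^sub>r = mat t r (\<lambda>(i, j). G $$ (j, i))"
  obtain v where v: "v \<in> carrier_vec r" "v \<noteq> 0\<^sub>v r" "G\<^sub>r *\<^sub>v v = 0\<^sub>v t"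
    using wide_mat_kernel_nontrivial[of G\<^sub>r t r] \<open>\<not> r \<le> t\<close> by (auto simp: G\<^sub>r_def)
  define z where "z = vec N (\<lambda>j. if j < r then v $ j else 0)"
  have z: "z \<in> carrier_vec N" by (simp add: z_def)
  have Gz: "transpose_mat G *\<^sub>v z = 0\<^sub>v t"
  proof (rule eq_vecI)
    fix i assume "i < dim_vec (0\<^sub>v t :: 'a vec)"
    then have i: "i < t" by simp
    have "(transpose_mat G *\<^sub>v z) $ i = (\<Sum>j<N. G $$ (j, i) * z $ j)"
      using index_transpose_mult_mat_vec[of z G i] z G i by simp
    also have "\<dots> = (\<Sum>j<r. G $$ (j, i) * v $ j)"
      using r by (intro sum.mono_neutral_cong_right) (auto simp: z_def)
    also have "\<dots> = (G\<^sub>r *\<^sub>v v) $ i"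
      using v(1) i by (auto simp: G\<^sub>r_def scalar_prod_def lessThan_atLeast0 intro!: sum.cong)
    finally show "(transpose_mat G *\<^sub>v z) $ i = 0\<^sub>v t $ i" using v(3) i by simp
  qed (use G in simp)
  have "transpose_mat A *\<^sub>v z = transpose_mat Y *\<^sub>v (transpose_mat G *\<^sub>v z)"
    unfolding GY transpose_mult[OF G Y] using G Y z by (simp add: assoc_mult_mat_vec)
  also have "\<dots> = 0\<^sub>v s"
    unfolding Gz using Y by (intro eq_vecI) (auto simp: scalar_prod_def)
  finally have "transpose_mat A *\<^sub>v z = 0\<^sub>v s" .
  then have "\<forall>j<r. z $ j = 0" using indep z by blast
  then have "v = 0\<^sub>v r" using v(1) r by (intro eq_vecI) (auto simp: z_def)
  then show False using v(2) by contradiction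
qed

lemma (in vec_space) indpt_subset_spanning_cols:
  assumes A: "A \<in> carrier_mat n nc"
  obtains S where "S \<subseteq> set (cols A)" "lin_indpt S" "card S = rank A" "set (cols A) \<subseteq> span S"
proof -
  let ?indpt_cols = "\<lambda>T. T \<subseteq> set (cols A) \<and> lin_indpt T"
  obtain S where maxS: "maximal S ?indpt_cols"
    using maximal_exists[of ?indpt_cols "card (set (cols A))" "{}"]
    by (meson List.finite_set card_mono empty_iff empty_subsetI finite_lin_indpt2 rev_finite_subset)
  have SA: "S \<subseteq> set (cols A)" and li: "lin_indpt S" using maxS unfolding maximal_def by auto
  have colsA: "set (cols A) \<subseteq> carrier_vec n" using A cols_dim by blast
  have spans: "set (cols A) \<subseteq> span S"
  proof
    fix v assume v: "v \<in> set (cols A)"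
    show "v \<in> span S"
    proof (cases "v \<in> S")
      case True
      then show ?thesis using in_own_span SA colsA by blast
    next
      case False
      then have "\<not> ?indpt_cols (S \<union> {v})" using maxS v unfolding maximal_def by blast
      then have "lin_dep (S \<union> {v})" using SA v by auto
      then show ?thesis using lin_dep_iff_in_span[OF _ li _ False] SA colsA v by auto
    qed
  qed
  show ?thesis using that[OF SA li _ spans] rank_card_indpt[OF A maxS] by simp
qed

lemma (in vec_space) span_mat_of_cols:
  assumes L: "set L \<subseteq> carrier_vec n" and v: "v \<in> span (set L)"
  shows "\<exists>y \<in> carrier_vec (length L). v = mat_of_cols n L *\<^sub>v y"
proof -
  obtain c where "v = lincomb_list c L"
    using v span_list_as_span[OF L] by (auto elim: in_span_listE)
  moreover have "\<forall>w\<in>set L. dim_vec w = n" using L by auto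
  ultimately have "v = mat_of_cols n L *\<^sub>v vec (length L) c"
    using lincomb_list_as_mat_mult by simp
  then show ?thesis by auto
qed

lemma factors_through_rank:
  fixes A :: "'a::field mat"
  assumes A: "A \<in> carrier_mat n nc"
  shows "factors_through A (vec_space.rank n A)"
proof -
  interpret vec_space "TYPE('a)" n .
  obtain S where S: "S \<subseteq> set (cols A)" "lin_indpt S" "card S = rank A" "set (cols A) \<subseteq> span S"
    by (rule indpt_subset_spanning_cols[OF A])
  have "finite S" using S(1) finite_subset by blast
  then obtain L where L: "set L = S" "distinct L"
    using finite_distinct_list by blast
  have LA: "set L \<subseteq> carrier_vec n" using L S(1) A cols_dim by blast
  have len: "length L = rank A" using distinct_card[OF L(2)] L(1) S(3) by simp
  then have G: "mat_of_cols n L \<in> carrier_mat n (rank A)" by auto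
  show ?thesis
  proof (rule factors_throughI[OF A G])
    fix c assume "c < nc"
    then have "col A c \<in> set (cols A)" using A by (simp add: cols_def)
    then have "col A c \<in> span (set L)" using S(4) L(1) by blast
    then obtain y where "y \<in> carrier_vec (length L)" "col A c = mat_of_cols n L *\<^sub>v y"
      using span_mat_of_cols[OF LA] by blast
    then show "\<exists>y \<in> carrier_vec (rank A). col A c = mat_of_cols n L *\<^sub>v y"
      using len by auto
  qed
qed

lemma full_row_rank_right_inverse:
  fixes H :: "'a::field mat"
  assumes H: "H \<in> carrier_mat N n" and rk: "vec_space.rank N H = N"
  shows "\<exists>K \<in> carrier_mat n N. H * K = 1\<^sub>m N"
proof -
  interpret vec_space "TYPE('a)" N .
  obtain S where S: "S \<subseteq> set (cols H)" "lin_indpt S" "card S = N"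
    using indpt_subset_spanning_cols[OF H] rk by (metis (no_types))
  have colsH: "set (cols H) \<subseteq> carrier_vec N" using H cols_dim by blast
  have "basis S"
    using dim_li_is_basis[OF fin_dim finite_subset[OF S(1)] _ S(2)] S colsH dim_is_n by auto
  then have "carrier_vec N \<subseteq> span (set (cols H))"
    using span_is_monotone[OF S(1)] unfolding basis_def by auto
  have "\<exists>y \<in> carrier_vec n. col (1\<^sub>m N) j = H *\<^sub>v y" if j: "j < N" for j
  proof -
    have "unit_vec N j \<in> span (set (cols H))"
      using \<open>carrier_vec N \<subseteq> span (set (cols H))\<close> unit_vec_carrier by blast
    then obtain y where "y \<in> carrier_vec (length (cols H))"
      "unit_vec N j = mat_of_cols N (cols H) *\<^sub>v y"
      using span_mat_of_cols[OF colsH] by blast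
    then show ?thesis using j H mat_of_cols_cols[of H] by auto
  qed
  then show ?thesis using mat_factor_of_cols_in_range[OF one_carrier_mat H] by metis
qed

lemma transpose_mult_vec_surj:
  fixes P :: "'a::field mat"
  assumes P: "P \<in> carrier_mat N N" and det: "det P \<noteq> 0" and y: "y \<in> carrier_vec N"
  shows "\<exists>z \<in> carrier_vec N. transpose_mat P *\<^sub>v z = y"
proof -
  have Pt: "transpose_mat P \<in> carrier_mat N N" using P by simp
  have "vec_space.rank N (transpose_mat P) = N"
    using det vec_space.det_rank_iff[OF Pt] det_transpose[OF P] by simp
  then obtain Q where Q: "Q \<in> carrier_mat N N" "transpose_mat P * Q = 1\<^sub>m N"
    using full_row_rank_right_inverse[OF Pt] by blast
  have "transpose_mat P *\<^sub>v (Q *\<^sub>v y) = y"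
    using Q Pt y by (simp flip: assoc_mult_mat_vec)
  then show ?thesis using Q(1) y by (intro bexI[of _ "Q *\<^sub>v y"]) auto
qed

lemma orthogonal_kernel_eq_transpose_mult:
  fixes H :: "'a::field mat"
  assumes H: "H \<in> carrier_mat N n" and K: "K \<in> carrier_mat n N" "H * K = 1\<^sub>m N"
    and v: "v \<in> carrier_vec n"
    and orth: "\<And>c. c \<in> carrier_vec n \<Longrightarrow> H *\<^sub>v c = 0\<^sub>v N \<Longrightarrow> v \<bullet> c = 0"
  shows "v = transpose_mat H *\<^sub>v (transpose_mat K *\<^sub>v v)"
proof -
  define w where "w = transpose_mat K *\<^sub>v v"
  have w: "w \<in> carrier_vec N" using K v by (simp add: w_def)
  \<comment> \<open>u - K H u lies in the kernel of H, so v cannot tell u from K H u\<close>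
  have agree: "v \<bullet> u = (transpose_mat H *\<^sub>v w) \<bullet> u" if u: "u \<in> carrier_vec n" for u
  proof -
    have KHu: "K *\<^sub>v (H *\<^sub>v u) \<in> carrier_vec n" using K H u by simp
    have "H *\<^sub>v (K *\<^sub>v (H *\<^sub>v u)) = (H * K) *\<^sub>v (H *\<^sub>v u)"
      using K(1) H u by simp
    also have "\<dots> = H *\<^sub>v u" unfolding K(2) using H u by simp
    finally have "H *\<^sub>v (K *\<^sub>v (H *\<^sub>v u)) = H *\<^sub>v u" .
    then have "H *\<^sub>v (u - K *\<^sub>v (H *\<^sub>v u)) = 0\<^sub>v N"
      using H u KHu by (simp add: mult_minus_distrib_mat_vec)
    then have "v \<bullet> (u - K *\<^sub>v (H *\<^sub>v u)) = 0" using orth u KHu by simp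
    then have "v \<bullet> u = v \<bullet> (K *\<^sub>v (H *\<^sub>v u))"
      using v u KHu by (simp add: scalar_prod_minus_distrib)
    also have "\<dots> = w \<bullet> (H *\<^sub>v u)"
      unfolding w_def using transpose_vec_mult_scalar[OF K(1) _ v] H u by simp
    also have "\<dots> = (transpose_mat H *\<^sub>v w) \<bullet> u"
      using transpose_vec_mult_scalar[OF H u w] by simp
    finally show ?thesis .
  qed
  have "v $ i = (transpose_mat H *\<^sub>v w) $ i" if "i < n" for i
    using agree[OF unit_vec_carrier[of n i]] that by simp
  then show ?thesis unfolding w_def[symmetric] using v H by (intro eq_vecI) auto
qed

lemma dual_code_kernel_full_rank:
  fixes H :: "'a::field mat"
  assumes H: "H \<in> carrier_mat N n" and rk: "vec_space.rank N H = N"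
  shows "dual_code n {c \<in> carrier_vec n. H *\<^sub>v c = 0\<^sub>v N} = row_space H"
proof (intro equalityI subsetI)
  fix v assume "v \<in> dual_code n {c \<in> carrier_vec n. H *\<^sub>v c = 0\<^sub>v N}"
  then have v: "v \<in> carrier_vec n"
    and orth: "\<And>c. c \<in> carrier_vec n \<Longrightarrow> H *\<^sub>v c = 0\<^sub>v N \<Longrightarrow> v \<bullet> c = 0"
    unfolding dual_code_def by auto
  obtain K where K: "K \<in> carrier_mat n N" "H * K = 1\<^sub>m N"
    using full_row_rank_right_inverse[OF H rk] by blast
  have "v = transpose_mat H *\<^sub>v (transpose_mat K *\<^sub>v v)"
    by (rule orthogonal_kernel_eq_transpose_mult[OF H K v orth])
  moreover have "transpose_mat K *\<^sub>v v \<in> carrier_vec N" using K v by simp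
  ultimately show "v \<in> row_space H" unfolding row_space_def using H by auto
next
  fix v assume "v \<in> row_space H"
  then obtain x where x: "x \<in> carrier_vec N" and v: "v = transpose_mat H *\<^sub>v x"
    unfolding row_space_def using H by auto
  have "v \<bullet> c = x \<bullet> (H *\<^sub>v c)" if "c \<in> carrier_vec n" for c
    using v transpose_vec_mult_scalar[OF H that x] by simp
  then show "v \<in> dual_code n {c \<in> carrier_vec n. H *\<^sub>v c = 0\<^sub>v N}"
    unfolding dual_code_def using v H x by auto
qed

lemma row_space_mult_left_invertible:
  fixes P H :: "'a::field mat"
  assumes P: "P \<in> carrier_mat N N" and det: "det P \<noteq> 0" and H: "H \<in> carrier_mat N n"
  shows "row_space (P * H) = row_space H"
proof -
  have PHt: "transpose_mat (P * H) *\<^sub>v z = transpose_mat H *\<^sub>v (transpose_mat P *\<^sub>v z)"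
    if "z \<in> carrier_vec N" for z
    using transpose_mult[OF P H] P H that by simp
  show ?thesis
  proof (intro equalityI subsetI)
    fix v assume "v \<in> row_space (P * H)"
    then obtain z where z: "z \<in> carrier_vec N" and v: "v = transpose_mat (P * H) *\<^sub>v z"
      unfolding row_space_def using P by auto
    have "transpose_mat P *\<^sub>v z \<in> carrier_vec N" using P z by simp
    then show "v \<in> row_space H" unfolding row_space_def v PHt[OF z] using H by auto
  next
    fix v assume "v \<in> row_space H"
    then obtain y where y: "y \<in> carrier_vec N" and v: "v = transpose_mat H *\<^sub>v y"
      unfolding row_space_def using H by auto
    obtain z where z: "z \<in> carrier_vec N" "transpose_mat P *\<^sub>v z = y"
      using transpose_mult_vec_surj[OF P det y] by blast
    then have "v = transpose_mat (P * H) *\<^sub>v z" unfolding v using PHt by simp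
    then show "v \<in> row_space (P * H)" unfolding row_space_def using z(1) P by auto
  qed
qed

lemma ext_elem_expansion:
  fixes emb :: "'f::field \<Rightarrow> 'a::field"
  assumes b_basis: "\<And>\<alpha>. \<exists>!c. c \<in> carrier_vec (length b)
                    \<and> \<alpha> = (\<Sum>j<length b. emb (c $ j) * b ! j)"
  shows "\<alpha> = (\<Sum>j<length b. emb (ext_elem emb b \<alpha> $ j) * b ! j)"
  using theI'[OF b_basis[of \<alpha>]] unfolding ext_elem_def by blast

lemma mult_add_less_mult:
  fixes a l s m :: nat
  assumes "a < s" and "l < m"
  shows "a * m + l < s * m"
proof -
  have "a * m + l < Suc a * m" using assms(2) by simp
  also have "\<dots> \<le> s * m" using assms(1) by (intro mult_le_mono1) simp
  finally show ?thesis .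
qed

lemma index_ext_mat:
  assumes a: "a < dim_row X" and l: "l < length b" and c: "c < dim_col X"
  shows "ext_mat emb b X $$ (a * length b + l, c) = ext_elem emb b (X $$ (a, c)) $ l"
proof -
  have "length b \<noteq> 0" using l by linarith
  then have "(a * length b + l) div length b = a" "(a * length b + l) mod length b = l"
    using div_mult_self1[of "length b" l a] l by (simp_all add: add.commute)
  then show ?thesis using mult_add_less_mult[OF a l] a c by (simp add: ext_mat_def)
qed

lemma factors_through_of_ext_mat:
  fixes emb :: "'f::field \<Rightarrow> 'a::field"
  assumes emb_add: "\<And>x y. emb (x + y) = emb x + emb y"
    and emb_mult: "\<And>x y. emb (x * y) = emb x * emb y"
    and b_basis: "\<And>\<alpha>. \<exists>!c. c \<in> carrier_vec (length b)
                  \<and> \<alpha> = (\<Sum>j<length b. emb (c $ j) * b ! j)"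
    and ext_factor: "factors_through (ext_mat emb b X) r"
  shows "factors_through X r"
proof -
  let ?m = "length b"
  obtain G Y where G: "G \<in> carrier_mat (dim_row X * ?m) r" and Y: "Y \<in> carrier_mat r (dim_col X)"
    and GY: "ext_mat emb b X = G * Y"
    using ext_factor unfolding factors_through_def by (auto simp: ext_mat_def)
  have emb_sum: "emb (sum g A) = (\<Sum>x\<in>A. emb (g x))" for g :: "nat \<Rightarrow> 'f" and A
  proof -
    have "emb 0 = 0" using emb_add[of 0 0] by (metis add.right_neutral add_left_cancel)
    then show ?thesis using sum_comp_morphism[of emb g A] emb_add by (simp add: o_def)
  qed
  \<comment> \<open>reassemble each block of m rows of G into one row over the big field via the basis b\<close>
  define G' where "G' = mat (dim_row X) r (\<lambda>(a, j). \<Sum>l<?m. emb (G $$ (a * ?m + l, j)) * b ! l)"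
  have "X = G' * map_mat emb Y"
  proof (rule eq_matI)
    fix a c assume "a < dim_row (G' * map_mat emb Y)" "c < dim_col (G' * map_mat emb Y)"
    then have a: "a < dim_row X" and c: "c < dim_col X" using Y by (auto simp: G'_def)
    have ext_entry: "ext_elem emb b (X $$ (a, c)) $ l = (\<Sum>j<r. G $$ (a * ?m + l, j) * Y $$ (j, c))"
      if l: "l < ?m" for l
    proof -
      have "a * ?m + l < dim_row X * ?m" using mult_add_less_mult[OF a l] .
      then show ?thesis
        using index_ext_mat[OF a l c, of emb] GY G Y c
        by (auto simp: scalar_prod_def lessThan_atLeast0 intro!: sum.cong)
    qed
    have "X $$ (a, c) = (\<Sum>l<?m. emb (ext_elem emb b (X $$ (a, c)) $ l) * b ! l)"
      by (rule ext_elem_expansion[OF b_basis])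
    also have "\<dots> = (\<Sum>l<?m. \<Sum>j<r. emb (G $$ (a * ?m + l, j)) * emb (Y $$ (j, c)) * b ! l)"
      by (simp add: ext_entry emb_sum emb_mult sum_distrib_right)
    also have "\<dots> = (\<Sum>j<r. (\<Sum>l<?m. emb (G $$ (a * ?m + l, j)) * b ! l) * emb (Y $$ (j, c)))"
      by (subst sum.swap) (simp add: sum_distrib_left sum_distrib_right mult_ac)
    also have "\<dots> = (G' * map_mat emb Y) $$ (a, c)"
      using a c Y by (auto simp: G'_def scalar_prod_def lessThan_atLeast0 intro!: sum.cong)
    finally show "X $$ (a, c) = (G' * map_mat emb Y) $$ (a, c)" .
  qed (use Y in \<open>auto simp: G'_def\<close>)
  then show ?thesis
    unfolding factors_through_def using Y by (intro exI[of _ G'] exI[of _ "map_mat emb Y"]) (auto simp: G'_def)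
qed

lemma pick_atLeastLessThan:
  assumes "c < k"
  shows "pick {d..<d + k} c = d + c"
  using assms by (induction c) (auto intro!: Least_equality)

lemma col_block_carrier_index:
  assumes E: "E \<in> carrier_mat s (sum_list ns)" and i: "i < length ns"
  shows "col_block ns i E \<in> carrier_mat s (ns ! i)"
    and "c < ns ! i \<Longrightarrow> col (col_block ns i E) c = col E (sum_list (take i ns) + c)"
proof -
  define d where "d = sum_list (take i ns)"
  have block_end: "sum_list (take (Suc i) ns) = d + ns ! i"
    unfolding d_def using i by (simp add: take_Suc_conv_app_nth)
  have block_le: "d + ns ! i \<le> sum_list ns"
    using block_end by (metis append_take_drop_id le_add1 sum_list_append)
  then have block: "{j. j < dim_col E \<and> j \<in> {d..<d + ns ! i}} = {d..<d + ns ! i}"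
    using E by auto
  have rows: "{a. a < dim_row E \<and> a \<in> UNIV} = {..<s}" using E by auto
  have "dim_row (col_block ns i E) = s"
    unfolding col_block_def dim_submatrix rows by simp
  moreover have "dim_col (col_block ns i E) = ns ! i"
    unfolding col_block_def dim_submatrix block_end d_def[symmetric] block by simp
  ultimately show carrier: "col_block ns i E \<in> carrier_mat s (ns ! i)" by auto
  assume c: "c < ns ! i"
  show "col (col_block ns i E) c = col E (d + c)"
  proof (rule eq_vecI)
    fix a assume "a < dim_vec (col E (d + c))"
    then have a: "a < s" using E by simp
    have "col_block ns i E $$ (a, c) = E $$ (pick UNIV a, pick {d..<d + ns ! i} c)"
      unfolding col_block_def block_end d_def[symmetric] using a c block rows
      by (intro submatrix_index) auto
    then show "col (col_block ns i E) c $ a = col E (d + c) $ a"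
      using carrier a c E block_le pick_atLeastLessThan[OF c] by (auto simp: pick_UNIV)
  qed (use carrier E in simp)
qed

lemma less_sum_list_decomp:
  fixes ns :: "nat list"
  assumes "c < sum_list ns"
  obtains i c' where "i < length ns" "c' < ns ! i" "c = sum_list (take i ns) + c'"
  using assms
proof (induction ns arbitrary: c thesis)
  case Nil
  then show ?case by simp
next
  case (Cons x ns)
  show ?case
  proof (cases "c < x")
    case True
    then show ?thesis using Cons.prems(1)[of 0 c] by simp
  next
    case False
    then have "c - x < sum_list ns" using Cons.prems(2) by simp
    obtain i c' where "i < length ns" "c' < ns ! i" "c - x = sum_list (take i ns) + c'"
      by (rule Cons.IH[OF _ \<open>c - x < sum_list ns\<close>])
    then show ?thesis using Cons.prems(1)[of "Suc i" c'] False by simp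
  qed
qed

lemma mat_of_cols_concat_factor:
  fixes Gs :: "nat \<Rightarrow> 'a::semiring_1 mat"
  assumes Gs: "\<And>i. i < l \<Longrightarrow> Gs i \<in> carrier_mat s (w i)"
  defines "G \<equiv> mat_of_cols s (concat (map (\<lambda>i. cols (Gs i)) [0..<l]))"
  shows "G \<in> carrier_mat s (\<Sum>i<l. w i)"
    and "i < l \<Longrightarrow> \<exists>S \<in> carrier_mat (\<Sum>i<l. w i) (w i). Gs i = G * S"
proof -
  have "length (concat (map (\<lambda>i. cols (Gs i)) [0..<l])) = (\<Sum>i\<leftarrow>[0..<l]. length (cols (Gs i)))"
    by (simp add: length_concat o_def)
  also have "\<dots> = (\<Sum>i\<leftarrow>[0..<l]. w i)"
    using Gs by (intro arg_cong[where f = sum_list] map_cong) auto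
  also have "\<dots> = (\<Sum>i<l. w i)"
    by (simp add: sum_set_upt_conv_sum_list_nat[symmetric] lessThan_atLeast0)
  finally show G: "G \<in> carrier_mat s (\<Sum>i<l. w i)" unfolding G_def by auto
  assume i: "i < l"
  have "set (cols (Gs j)) \<subseteq> carrier_vec s" if "j < l" for j
    using Gs[OF that] cols_dim carrier_matD(1) by metis
  then have "set (concat (map (\<lambda>i. cols (Gs i)) [0..<l])) \<subseteq> carrier_vec s" by fastforce
  then have "set (cols (Gs i)) \<subseteq> set (cols G)"
    unfolding G_def using i by (auto simp: cols_mat_of_cols)
  then show "\<exists>S \<in> carrier_mat (\<Sum>i<l. w i) (w i). Gs i = G * S"
    by (rule mat_factor_of_cols_subset[OF Gs[OF i] G])
qed

lemma factors_through_col_blocks: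
  fixes E :: "'a::semiring_1 mat"
  assumes E: "E \<in> carrier_mat s (sum_list ns)"
    and blocks: "\<And>i. i < length ns \<Longrightarrow> factors_through (col_block ns i E) (w i)"
  shows "factors_through E (\<Sum>i<length ns. w i)"
proof -
  have "\<exists>G Y. G \<in> carrier_mat s (w i) \<and> Y \<in> carrier_mat (w i) (ns ! i)
      \<and> col_block ns i E = G * Y" if "i < length ns" for i
    using blocks[OF that] col_block_carrier_index(1)[OF E that] unfolding factors_through_def by auto
  then obtain Gs Ys where GY: "\<And>i. i < length ns \<Longrightarrow> Gs i \<in> carrier_mat s (w i)
      \<and> Ys i \<in> carrier_mat (w i) (ns ! i) \<and> col_block ns i E = Gs i * Ys i"
    by metis
  have Gs: "Gs i \<in> carrier_mat s (w i)" if "i < length ns" for i using GY[OF that] by blast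
  define G where "G = mat_of_cols s (concat (map (\<lambda>i. cols (Gs i)) [0..<length ns]))"
  have G: "G \<in> carrier_mat s (\<Sum>i<length ns. w i)"
    unfolding G_def by (rule mat_of_cols_concat_factor(1)) (fact Gs)
  show ?thesis
  proof (rule factors_throughI[OF E G])
    fix c assume "c < sum_list ns"
    then obtain i c' where i: "i < length ns" and c': "c' < ns ! i"
      and c: "c = sum_list (take i ns) + c'"
      by (rule less_sum_list_decomp)
    have Yi: "Ys i \<in> carrier_mat (w i) (ns ! i)" and block: "col_block ns i E = Gs i * Ys i"
      using GY[OF i] by auto
    have "\<exists>S \<in> carrier_mat (\<Sum>i<length ns. w i) (w i). Gs i = G * S"
      unfolding G_def by (rule mat_of_cols_concat_factor(2)) (fact Gs, fact i)
    then obtain S where S: "S \<in> carrier_mat (\<Sum>i<length ns. w i) (w i)" "Gs i = G * S" ..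
    have "col E c = col (col_block ns i E) c'"
      using col_block_carrier_index(2)[OF E i c'] c by simp
    also have "\<dots> = Gs i *\<^sub>v col (Ys i) c'"
      unfolding block by (rule col_mult2[OF Gs[OF i] Yi c'])
    also have "\<dots> = G *\<^sub>v (S *\<^sub>v col (Ys i) c')"
      unfolding S(2) using S(1) G Yi c' by (simp add: assoc_mult_mat_vec)
    finally show "\<exists>y \<in> carrier_vec (\<Sum>i<length ns. w i). col E c = G *\<^sub>v y"
      using S(1) Yi c' by (intro bexI[of _ "S *\<^sub>v col (Ys i) c'"]) auto
  qed
qed

lemma factors_through_sum_rank_weight:
  fixes emb :: "'f::field \<Rightarrow> 'a::field"
  assumes emb_add: "\<And>x y. emb (x + y) = emb x + emb y"
    and emb_mult: "\<And>x y. emb (x * y) = emb x * emb y"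
    and b_basis: "\<And>\<alpha>. \<exists>!c. c \<in> carrier_vec (length b)
                  \<and> \<alpha> = (\<Sum>j<length b. emb (c $ j) * b ! j)"
    and E: "E \<in> carrier_mat s (sum_list ns)"
  shows "factors_through E (sum_rank_weight emb b ns E)"
  unfolding sum_rank_weight_def
proof (rule factors_through_col_blocks[OF E])
  fix i assume "i < length ns"
  have "factors_through (ext_mat emb b (col_block ns i E)) (rank_q emb b (col_block ns i E))"
    unfolding rank_q_def by (rule factors_through_rank[OF carrier_matI[OF refl refl]])
  then show "factors_through (col_block ns i E) (rank_q emb b (col_block ns i E))"
    by (rule factors_through_of_ext_mat[OF emb_add emb_mult b_basis])
qed

definition echelon_pivots :: "'a::zero mat \<Rightarrow> (nat \<Rightarrow> nat) \<Rightarrow> bool" where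
  "echelon_pivots A f \<longleftrightarrow> (\<forall>i < dim_row A. f i \<le> dim_col A \<and>
      (\<forall>j < f i. A $$ (i, j) = 0) \<and>
      (f i < dim_col A \<longrightarrow> A $$ (i, f i) \<noteq> 0) \<and>
      (Suc i < dim_row A \<longrightarrow> f i < f (Suc i) \<or> f (Suc i) = dim_col A))"

lemma row_echelon_iff_pivots: "row_echelon A \<longleftrightarrow> (\<exists>f. echelon_pivots A f)"
  unfolding row_echelon_def echelon_pivots_def ..

lemma echelon_pivots_mono:
  assumes f: "echelon_pivots A f" and "i < j" and "j < dim_row A"
  shows "f i < f j \<or> f j = dim_col A"
  using assms(2,3)
proof (induction j)
  case 0
  then show ?case by simp
next
  case (Suc j)
  have step: "f j < f (Suc j) \<or> f (Suc j) = dim_col A" and bound: "f (Suc j) \<le> dim_col A"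
    using f Suc.prems(2) unfolding echelon_pivots_def by auto
  show ?case
  proof (cases "i = j")
    case False
    then have "f i < f j \<or> f j = dim_col A" using Suc by simp
    then show ?thesis using step bound by auto
  qed (use step in simp)
qed

lemma zero_rowsD:
  assumes "i \<in> zero_rows A" and "c < dim_col A"
  shows "A $$ (i, c) = 0"
proof -
  have i: "i < dim_row A" and zero: "row A i = 0\<^sub>v (dim_col A)"
    using assms(1) by (auto simp: zero_rows_def)
  show ?thesis using arg_cong[OF zero, of "\<lambda>v. v $ c"] i assms(2) by simp
qed

lemma echelon_pivots_zero_rows_iff:
  assumes f: "echelon_pivots A f" and j: "j < dim_row A"
  shows "j \<in> zero_rows A \<longleftrightarrow> f j = dim_col A"
proof
  assume zero: "j \<in> zero_rows A"
  show "f j = dim_col A"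
  proof (rule ccontr)
    assume "f j \<noteq> dim_col A"
    then have "f j < dim_col A" using f j unfolding echelon_pivots_def by force
    then show False using zero_rowsD[OF zero] f j unfolding echelon_pivots_def by auto
  qed
next
  assume "f j = dim_col A"
  then have "row A j = 0\<^sub>v (dim_col A)"
    using f j unfolding echelon_pivots_def by (intro eq_vecI) auto
  then show "j \<in> zero_rows A" using j by (simp add: zero_rows_def)
qed

lemma row_echelon_zero_rows_atLeastLessThan:
  assumes "row_echelon A"
  obtains r where "r \<le> dim_row A" "zero_rows A = {r..<dim_row A}"
proof -
  obtain f where f: "echelon_pivots A f" using assms row_echelon_iff_pivots by blast
  let ?Z = "zero_rows A"
  have up: "j \<in> ?Z" if "i \<in> ?Z" "i < j" "j < dim_row A" for i j
  proof -
    have "f i = dim_col A" using that echelon_pivots_zero_rows_iff[OF f] by (simp add: zero_rows_def)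
    moreover have "f j \<le> dim_col A" using f that(3) unfolding echelon_pivots_def by blast
    ultimately have "f j = dim_col A" using echelon_pivots_mono[OF f that(2,3)] by auto
    then show ?thesis using echelon_pivots_zero_rows_iff[OF f that(3)] by simp
  qed
  show ?thesis
  proof (cases "?Z = {}")
    case True
    then show ?thesis using that[of "dim_row A"] by simp
  next
    case False
    have fin: "finite ?Z" by (simp add: zero_rows_def)
    have "?Z \<subseteq> {Min ?Z..<dim_row A}" using Min_le[OF fin] by (auto simp: zero_rows_def)
    moreover have "{Min ?Z..<dim_row A} \<subseteq> ?Z"
    proof
      fix j assume j: "j \<in> {Min ?Z..<dim_row A}"
      show "j \<in> ?Z"
      proof (cases "j = Min ?Z")
        case False
        then show ?thesis using up[OF Min_in[OF fin \<open>?Z \<noteq> {}\<close>]] j by auto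
      qed (use Min_in[OF fin \<open>?Z \<noteq> {}\<close>] in simp)
    qed
    ultimately show ?thesis using that[of "Min ?Z"] Min_in[OF fin False] by (auto simp: zero_rows_def)
  qed
qed

lemma row_echelon_left_kernel_iff:
  fixes A :: "'a::field mat"
  assumes "row_echelon A" and z: "z \<in> carrier_vec (dim_row A)"
  shows "transpose_mat A *\<^sub>v z = 0\<^sub>v (dim_col A) \<longleftrightarrow>
    (\<forall>j < dim_row A. j \<notin> zero_rows A \<longrightarrow> z $ j = 0)"
proof
  obtain f where f: "echelon_pivots A f" using assms row_echelon_iff_pivots by blast
  assume kernel: "transpose_mat A *\<^sub>v z = 0\<^sub>v (dim_col A)"
  let ?bad = "\<lambda>j. j < dim_row A \<and> j \<notin> zero_rows A \<and> z $ j \<noteq> 0"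
  show "\<forall>j < dim_row A. j \<notin> zero_rows A \<longrightarrow> z $ j = 0"
  proof (rule ccontr)
    assume "\<not> (\<forall>j < dim_row A. j \<notin> zero_rows A \<longrightarrow> z $ j = 0)"
    \<comment> \<open>in the pivot column of the first nonzero row j with z $ j \<noteq> 0,
      no other row contributes to the combination\<close>
    then obtain j where j: "?bad j" and below: "\<And>i. i < j \<Longrightarrow> \<not> ?bad i"
      using exists_least_iff[of ?bad] by blast
    have pivot: "f j < dim_col A" "A $$ (j, f j) \<noteq> 0"
      using j echelon_pivots_zero_rows_iff[OF f] f unfolding echelon_pivots_def
      by (metis order.not_eq_order_implies_strict)+
    have off_pivot: "A $$ (i, f j) * z $ i = 0" if i: "i < dim_row A" "i \<noteq> j" for i
    proof (cases "i < j")
      case True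
      then have "i \<in> zero_rows A \<or> z $ i = 0" using below i(1) by blast
      then show ?thesis using zero_rowsD pivot(1) by fastforce
    next
      case False
      then have "f j < f i" using echelon_pivots_mono[OF f, of j i] i pivot(1) by auto
      then show ?thesis using f i(1) unfolding echelon_pivots_def by auto
    qed
    have "(\<Sum>i<dim_row A. A $$ (i, f j) * z $ i) = (\<Sum>i\<in>{j}. A $$ (i, f j) * z $ i)"
      by (rule sum.mono_neutral_right) (use j off_pivot in auto)
    then have "(\<Sum>i<dim_row A. A $$ (i, f j) * z $ i) = A $$ (j, f j) * z $ j" by simp
    then have "(transpose_mat A *\<^sub>v z) $ f j \<noteq> 0"
      using index_transpose_mult_mat_vec[OF z pivot(1)] pivot(2) j by simp
    then show False using kernel pivot(1) by simp
  qed
next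
  assume supp: "\<forall>j < dim_row A. j \<notin> zero_rows A \<longrightarrow> z $ j = 0"
  have "A $$ (i, c) * z $ i = 0" if "i < dim_row A" "c < dim_col A" for i c
    using supp zero_rowsD that by fastforce
  then show "transpose_mat A *\<^sub>v z = 0\<^sub>v (dim_col A)"
    using index_transpose_mult_mat_vec[OF z] by (intro eq_vecI) (auto intro!: sum.neutral)
qed

lemma row_echelon_card_zero_rows:
  fixes A :: "'a::field mat"
  assumes ref: "row_echelon A" and A: "A \<in> carrier_mat N s" and "factors_through A t"
  shows "N - t \<le> card (zero_rows A)"
proof -
  obtain r where r: "r \<le> dim_row A" "zero_rows A = {r..<dim_row A}"
    by (rule row_echelon_zero_rows_atLeastLessThan[OF ref])
  have "r \<le> t"
  proof (rule independent_rows_le_factor_dim[OF A assms(3)])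
    show "r \<le> N" using r A by simp
    fix z assume z: "z \<in> carrier_vec N" and ker: "transpose_mat A *\<^sub>v z = 0\<^sub>v s"
    have "\<forall>j<N. j \<notin> zero_rows A \<longrightarrow> z $ j = 0"
      using row_echelon_left_kernel_iff[OF ref, of z] z ker A by simp
    then show "\<forall>j<r. z $ j = 0" using r A by auto
  qed
  then show ?thesis using r A by simp
qed

lemma pick_bij_betw:
  assumes "finite I"
  shows "bij_betw (pick I) {..<card I} I"
proof (rule bij_betw_byWitness[where f' = "\<lambda>i. card {a \<in> I. a < i}"])
  have "card {a \<in> I. a < i} < card I" if "i \<in> I" for i
    using that assms by (intro psubset_card_mono) auto
  then show "(\<lambda>i. card {a \<in> I. a < i}) ` I \<subseteq> {..<card I}" by auto
qed (auto simp: pick_card_in_set card_pick_le pick_in_set_le)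

lemma submatrix_rows_carrier_index:
  assumes A: "A \<in> carrier_mat N K" and I: "I \<subseteq> {..<N}"
  shows "submatrix A I UNIV \<in> carrier_mat (card I) K"
    and "i < card I \<Longrightarrow> c < K \<Longrightarrow> submatrix A I UNIV $$ (i, c) = A $$ (pick I i, c)"
proof -
  have rows: "{i. i < dim_row A \<and> i \<in> I} = I" and cols: "{j. j < dim_col A \<and> j \<in> UNIV} = {..<K}"
    using A I by auto
  have "dim_row (submatrix A I UNIV) = card I" "dim_col (submatrix A I UNIV) = K"
    unfolding dim_submatrix rows cols by simp_all
  then show "submatrix A I UNIV \<in> carrier_mat (card I) K" by blast
  show "i < card I \<Longrightarrow> c < K \<Longrightarrow> submatrix A I UNIV $$ (i, c) = A $$ (pick I i, c)"
    using submatrix_index[of i A I c UNIV] unfolding rows cols by (simp add: pick_UNIV)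
qed

lemma transpose_submatrix_rows_mult_vec:
  fixes A :: "'a::comm_ring_1 mat"
  assumes A: "A \<in> carrier_mat N K" and I: "I \<subseteq> {..<N}"
    and z: "z \<in> carrier_vec N" and supp: "\<forall>j<N. j \<notin> I \<longrightarrow> z $ j = 0"
  shows "transpose_mat (submatrix A I UNIV) *\<^sub>v vec (card I) (\<lambda>i. z $ pick I i)
    = transpose_mat A *\<^sub>v z"
proof (rule eq_vecI)
  note B = submatrix_rows_carrier_index[OF A I]
  have fin: "finite I" using finite_subset[OF I] by simp
  fix c assume "c < dim_vec (transpose_mat A *\<^sub>v z)"
  then have c: "c < K" using A by simp
  have "(transpose_mat (submatrix A I UNIV) *\<^sub>v vec (card I) (\<lambda>i. z $ pick I i)) $ c
      = (\<Sum>i<card I. submatrix A I UNIV $$ (i, c) * z $ pick I i)"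
    using index_transpose_mult_mat_vec[of _ "submatrix A I UNIV" c] B(1) c by simp
  also have "\<dots> = (\<Sum>i<card I. A $$ (pick I i, c) * z $ pick I i)"
    using B(2) c by (intro sum.cong) auto
  also have "\<dots> = (\<Sum>j\<in>I. A $$ (j, c) * z $ j)"
    using sum.reindex_bij_betw[OF pick_bij_betw[OF fin], of "\<lambda>j. A $$ (j, c) * z $ j"] by simp
  also have "\<dots> = (\<Sum>j<N. A $$ (j, c) * z $ j)"
    using I supp by (intro sum.mono_neutral_left) auto
  also have "\<dots> = (transpose_mat A *\<^sub>v z) $ c"
    using index_transpose_mult_mat_vec[of z A c] z A c by simp
  finally show "(transpose_mat (submatrix A I UNIV) *\<^sub>v vec (card I) (\<lambda>i. z $ pick I i)) $ c
      = (transpose_mat A *\<^sub>v z) $ c" .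
qed (use A submatrix_rows_carrier_index[OF A I] in simp)

lemma row_space_submatrix_rows:
  fixes A :: "'a::comm_ring_1 mat"
  assumes A: "A \<in> carrier_mat N K" and I: "I \<subseteq> {..<N}"
  shows "row_space (submatrix A I UNIV) =
    {transpose_mat A *\<^sub>v z | z. z \<in> carrier_vec N \<and> (\<forall>j<N. j \<notin> I \<longrightarrow> z $ j = 0)}"
    (is "_ = ?supported")
proof
  let ?B = "submatrix A I UNIV"
  note B = submatrix_rows_carrier_index(1)[OF A I]
  note restrict = transpose_submatrix_rows_mult_vec[OF A I]
  show "row_space ?B \<subseteq> ?supported"
  proof
    fix v assume "v \<in> row_space ?B"
    then obtain x where x: "x \<in> carrier_vec (card I)" and v: "v = transpose_mat ?B *\<^sub>v x"
      unfolding row_space_def using B by auto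
    define z where "z = vec N (\<lambda>j. if j \<in> I then x $ card {a \<in> I. a < j} else 0)"
    have z: "z \<in> carrier_vec N" "\<forall>j<N. j \<notin> I \<longrightarrow> z $ j = 0" by (auto simp: z_def)
    have "z $ pick I i = x $ i" if i: "i < card I" for i
      using pick_in_set_le[OF i] I card_pick_le[OF i] by (auto simp: z_def)
    then have "vec (card I) (\<lambda>i. z $ pick I i) = x" using x by (intro eq_vecI) auto
    then have "v = transpose_mat A *\<^sub>v z" using v restrict[OF z] by simp
    then show "v \<in> ?supported" using z by blast
  qed
  show "?supported \<subseteq> row_space ?B"
  proof
    fix v assume "v \<in> ?supported"
    then obtain z where z: "z \<in> carrier_vec N" "\<forall>j<N. j \<notin> I \<longrightarrow> z $ j = 0"
      and v: "v = transpose_mat A *\<^sub>v z" by blast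
    then have "v = transpose_mat ?B *\<^sub>v vec (card I) (\<lambda>i. z $ pick I i)" using restrict by simp
    moreover have "vec (card I) (\<lambda>i. z $ pick I i) \<in> carrier_vec (dim_row ?B)" using B by simp
    ultimately show "v \<in> row_space ?B" unfolding row_space_def by blast
  qed
qed

lemma transpose_mult_mult_transpose:
  fixes P H E :: "'a::comm_semiring_0 mat"
  assumes P: "P \<in> carrier_mat m N" and H: "H \<in> carrier_mat N n" and E: "E \<in> carrier_mat s n"
  shows "transpose_mat (P * (H * transpose_mat E)) = E * transpose_mat (P * H)"
proof -
  have HEt: "H * transpose_mat E \<in> carrier_mat N s" using H E by simp
  have "transpose_mat (P * (H * transpose_mat E)) = transpose_mat (H * transpose_mat E) * transpose_mat P"
    by (rule transpose_mult[OF P HEt])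
  also have "\<dots> = (E * transpose_mat H) * transpose_mat P"
    using transpose_mult[OF H, of "transpose_mat E" s] E by simp
  also have "\<dots> = E * transpose_mat (P * H)"
    using transpose_mult[OF P H] assoc_mult_mat[of E s n "transpose_mat H" N "transpose_mat P" m] P H E
    by simp
  finally show ?thesis .
qed

lemma row_space_submatrix_zero_rows:
  fixes P H E :: "'a::field mat"
  assumes P: "P \<in> carrier_mat N N" and det: "det P \<noteq> 0"
    and H: "H \<in> carrier_mat N n" and E: "E \<in> carrier_mat s n"
    and ref: "row_echelon (P * (H * transpose_mat E))"
  shows "row_space (submatrix (P * H) (zero_rows (P * (H * transpose_mat E))) UNIV)
    = right_kernel E \<inter> row_space H"
proof -
  let ?S = "P * (H * transpose_mat E)"
  let ?Z = "zero_rows ?S"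
  have S: "?S \<in> carrier_mat N s" using P H E by simp
  have PH: "P * H \<in> carrier_mat N n" using P H by simp
  have St: "transpose_mat ?S *\<^sub>v z = E *\<^sub>v (transpose_mat (P * H) *\<^sub>v z)"
    if "z \<in> carrier_vec N" for z
    using transpose_mult_mult_transpose[OF P H E] E PH that by simp
  have "row_space (submatrix (P * H) ?Z UNIV)
      = {transpose_mat (P * H) *\<^sub>v z | z. z \<in> carrier_vec N \<and> (\<forall>j<N. j \<notin> ?Z \<longrightarrow> z $ j = 0)}"
    by (rule row_space_submatrix_rows[OF PH]) (use P in \<open>auto simp: zero_rows_def\<close>)
  also have "\<dots> = {transpose_mat (P * H) *\<^sub>v z | z. z \<in> carrier_vec N
      \<and> E *\<^sub>v (transpose_mat (P * H) *\<^sub>v z) = 0\<^sub>v s}"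
    using row_echelon_left_kernel_iff[OF ref] St S by (metis (no_types, lifting) carrier_matD)
  also have "\<dots> = right_kernel E \<inter> row_space (P * H)"
    unfolding right_kernel_def row_space_def using P PH E by auto
  also have "\<dots> = right_kernel E \<inter> row_space H"
    using row_space_mult_left_invertible[OF P det H] by simp
  finally show ?thesis .
qed

theorem lemma2:
  fixes emb :: "'f::{field,finite} \<Rightarrow> 'a::{field,finite}"
    and b :: "'a list" and q m n k s t :: nat and ns ts :: "nat list"
    and C :: "'a vec set" and H E P :: "'a mat"
  assumes q_def: "q = card (UNIV :: 'f set)"
    and m_pos: "m \<ge> 1"
    and card_big: "card (UNIV :: 'a set) = q ^ m"
    and emb_add: "\<And>x y. emb (x + y) = emb x + emb y"
    and emb_mult: "\<And>x y. emb (x * y) = emb x * emb y"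
    and emb_one: "emb 1 = 1"
    and b_len: "length b = m"
    and b_basis: "\<And>\<alpha>. \<exists>!c. c \<in> carrier_vec m \<and> \<alpha> = (\<Sum>j<m. emb (c $ j) * b ! j)"
    and ns_pos: "\<forall>i < length ns. ns ! i > 0"
    and n_def: "n = sum_list ns"
    and k_le: "k \<le> n"
    and H_dim: "H \<in> carrier_mat (n - k) n"
    and H_rank: "rank_qm H = n - k"
    and C_def: "C = {c \<in> carrier_vec n. H *\<^sub>v c = 0\<^sub>v (n - k)}"
    and s_pos: "s \<ge> 1"
    and E_dim: "E \<in> carrier_mat s n"
    and ts_len: "length ts = length ns"
    and E_blocks: "\<forall>i < length ns. rank_q emb b (col_block ns i E) = ts ! i"
    and t_def: "t = sum_list ts"
    and t_lt: "t < n - k"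
    and P_dim: "P \<in> carrier_mat (n - k) (n - k)"
    and P_rank: "rank_qm P = n - k"
    and PS_ref: "row_echelon (P * (H * transpose_mat E))"
  shows "card (zero_rows (P * (H * transpose_mat E))) \<ge> n - k - t
    \<and> row_space (submatrix (P * H) (zero_rows (P * (H * transpose_mat E))) UNIV)
          = right_kernel E \<inter> dual_code n C
    \<and> row_space (submatrix (P * H) (zero_rows (P * (H * transpose_mat E))) UNIV)
          = right_kernel E \<inter> row_space H"
proof -
  let ?S = "P * (H * transpose_mat E)"
  have "t = (\<Sum>i<length ns. ts ! i)"
    unfolding t_def sum_list_sum_nth ts_len by (simp add: atLeast0LessThan)
  also have "\<dots> = sum_rank_weight emb b ns E"
    unfolding sum_rank_weight_def using E_blocks by simp
  finally have "factors_through E t"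
    using factors_through_sum_rank_weight[OF emb_add emb_mult b_basis[folded b_len]]
      E_dim[unfolded n_def] by simp
  then have "factors_through (transpose_mat E) t" by (rule factors_through_transpose)
  then have "factors_through (H * transpose_mat E) t"
    by (rule factors_through_mult_left) (use H_dim E_dim in auto)
  then have S_factor: "factors_through ?S t"
    by (rule factors_through_mult_left) (use P_dim H_dim in auto)
  have S: "?S \<in> carrier_mat (n - k) s" using P_dim H_dim E_dim by simp
  have "n - k - t \<le> card (zero_rows ?S)" by (rule row_echelon_card_zero_rows[OF PS_ref S S_factor])
  moreover have "det P \<noteq> 0"
    using P_rank P_dim vec_space.det_rank_iff[OF P_dim] unfolding rank_qm_def by simp
  then have "row_space (submatrix (P * H) (zero_rows ?S) UNIV) = right_kernel E \<inter> row_space H"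
    by (rule row_space_submatrix_zero_rows[OF P_dim _ H_dim E_dim PS_ref])
  moreover have "dual_code n C = row_space H"
    using dual_code_kernel_full_rank[OF H_dim] H_rank H_dim unfolding C_def rank_qm_def by simp
  ultimately show ?thesis by simp
qed

end
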